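(* Let $G$ be an abstract $k$-molecule and let $A_k,B_k\subseteq V_G$ be such that both $(G,A_k)$ and $(G,B_k)$ are $k$-premolecules. Then (i) the subgraphs of $G$ induced by $A_k\setminus B_k$, by $B_k\setminus A_k$ and by $V_G\setminus(A_k\cup B_k)$ are all discrete (edgeless), and (ii) the subgraphs of $G$ induced by $A_k$ and by $B_k$ are isomorphic.
   Context: Graphs are finite and undirected; the connectivity of a graph is the largest $k$ such that one must remove at least $k$ vertices to disconnect it (by convention $K_m$, $m\ge3$, has connectivity $m-1$). $k$-molecule: for $k,h\ge1$, $B=\{b_1,\dots,b_k\}$ and a set $\mathcal B$ of edges among vertices of $B$, $\vartheta_{B}^{\mathcal B,h}$ is the graph with vertex set $B\cup\{v_1,\dots,v_h\}$ and edge set $\mathcal B\cup\{v_ib_j:1\le i\le h,1\le j\le k\}$, where $h\ge k-k'$, $k'$ being the connectivity of the subgraph induced by $B$. For a graph $G$ and $A\subseteq V_G$ with $|A|=k$, $(G,A)$ is a $k$-premolecule if there is a $k$-molecule $\vartheta_{B}^{\mathcal B,h}$ and an isomorphism $G\to\vartheta_{B}^{\mathcal B,h}$ mapping $A$ onto $B$; $G$ is an abstract $k$-molecule if such an $A$ exists. *)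

theory Defs
  imports Main
begin

type_synonym 'a graph = "'a set \<times> 'a set set"

definition verts :: "'a graph \<Rightarrow> 'a set" where "verts G = fst G"
definition edges :: "'a graph \<Rightarrow> 'a set set" where "edges G = snd G"

definition is_graph :: "'a graph \<Rightarrow> bool" where
  "is_graph G \<longleftrightarrow> finite (verts G) \<and>
     (\<forall>e\<in>edges G. e \<subseteq> verts G \<and> card e = 2)"

definition induced :: "'a graph \<Rightarrow> 'a set \<Rightarrow> 'a graph" where
  "induced G S = (verts G \<inter> S, {e \<in> edges G. e \<subseteq> S})"

definition discrete :: "'a graph \<Rightarrow> bool" where
  "discrete G \<longleftrightarrow> edges G = {}"

definition adj :: "'a graph \<Rightarrow> 'a \<Rightarrow> 'a \<Rightarrow> bool" where
  "adj G u v \<longleftrightarrow> u \<in> verts G \<and> v \<in> verts G \<and> {u, v} \<in> edges G"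

definition connected_graph :: "'a graph \<Rightarrow> bool" where
  "connected_graph G \<longleftrightarrow> (\<forall>u\<in>verts G. \<forall>v\<in>verts G. (adj G)\<^sup>*\<^sup>* u v)"

text \<open>Vertex connectivity: the least number of vertices whose removal disconnects
  the graph or leaves at most one vertex (so that \<open>K_m\<close> has connectivity \<open>m-1\<close>).\<close>
definition connectivity :: "'a graph \<Rightarrow> nat" where
  "connectivity G = (LEAST n. \<exists>S \<subseteq> verts G. card S = n \<and>
      (card (verts G - S) \<le> 1 \<or> \<not> connected_graph (induced G (verts G - S))))"

definition graph_iso :: "('a \<Rightarrow> 'b) \<Rightarrow> 'a graph \<Rightarrow> 'b graph \<Rightarrow> bool" where
  "graph_iso f G H \<longleftrightarrow> bij_betw f (verts G) (verts H) \<and>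
     (\<forall>u\<in>verts G. \<forall>v\<in>verts G. {u, v} \<in> edges G \<longleftrightarrow> {f u, f v} \<in> edges H)"

definition isomorphic :: "'a graph \<Rightarrow> 'b graph \<Rightarrow> bool" where
  "isomorphic G H \<longleftrightarrow> (\<exists>f. graph_iso f G H)"

definition molecule_graph :: "'b set \<Rightarrow> 'b set set \<Rightarrow> 'b set \<Rightarrow> 'b graph" where
  "molecule_graph B \<B> V = (B \<union> V, \<B> \<union> {{v, b} | v b. v \<in> V \<and> b \<in> B})"

text \<open>Side conditions for \<open>\<vartheta>_B^{\<B>,h}\<close> to be a \<open>k\<close>-molecule, with \<open>h = card V\<close>.\<close>
definition valid_molecule :: "nat \<Rightarrow> 'b set \<Rightarrow> 'b set set \<Rightarrow> 'b set \<Rightarrow> bool" where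
  "valid_molecule k B \<B> V \<longleftrightarrow> k \<ge> 1 \<and> finite B \<and> card B = k \<and> finite V \<and>
     card V \<ge> 1 \<and> B \<inter> V = {} \<and>
     (\<forall>e\<in>\<B>. e \<subseteq> B \<and> card e = 2) \<and>
     card V \<ge> k - connectivity (B, \<B>)"

text \<open>\<open>(G,A)\<close> is a \<open>k\<close>-premolecule. The model molecule is built on vertices of type nat
  (any finite graph has an isomorphic copy there).\<close>
definition premolecule :: "nat \<Rightarrow> 'a graph \<Rightarrow> 'a set \<Rightarrow> bool" where
  "premolecule k G A \<longleftrightarrow> A \<subseteq> verts G \<and> card A = k \<and>
     (\<exists>(B::nat set) \<B> V f. valid_molecule k B \<B> V \<and>
        graph_iso f G (molecule_graph B \<B> V) \<and> f ` A = B)"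

definition abstract_molecule :: "nat \<Rightarrow> 'a graph \<Rightarrow> bool" where
  "abstract_molecule k G \<longleftrightarrow> (\<exists>A. premolecule k G A)"

end

theory Submission
  imports Defs
begin

text \<open>In a \<open>k\<close>-premolecule \<open>(G,A)\<close> the vertices outside \<open>A\<close> form an independent set joined
  completely to \<open>A\<close>; hence every edge meeting \<open>V\<^sub>G - A\<close> is determined by \<open>A\<close> alone. For two
  premolecule bases \<open>A\<close>, \<open>B\<close> this makes \<open>A - B\<close>, \<open>B - A\<close> and \<open>V\<^sub>G - (A \<union> B)\<close> independent, and
  the map fixing \<open>A \<inter> B\<close> and sending \<open>A - B\<close> bijectively onto \<open>B - A\<close> (equal cardinalities,
  since \<open>|A| = |B| = k\<close>) is an isomorphism \<open>G[A] \<cong> G[B]\<close>: an edge of \<open>G[A]\<close> not inside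
  \<open>A \<inter> B\<close> exists iff one of its ends lies in \<open>A \<inter> B\<close>, and the same holds for its image in \<open>G[B]\<close>.\<close>

definition cone_base :: "'a graph \<Rightarrow> 'a set \<Rightarrow> bool" where
  "cone_base G A \<longleftrightarrow> A \<subseteq> verts G \<and>
     (\<forall>u\<in>verts G - A. \<forall>v\<in>verts G - A. {u, v} \<notin> edges G) \<and>
     (\<forall>u\<in>verts G - A. \<forall>a\<in>A. {u, a} \<in> edges G)"

lemma premolecule_cone_base:
  assumes "premolecule k G A"
  shows "cone_base G A"
proof -
  obtain B :: "nat set" and \<B> V f where vm: "valid_molecule k B \<B> V"
    and iso: "graph_iso f G (molecule_graph B \<B> V)" and fA: "f ` A = B"
    using assms unfolding premolecule_def by blast
  have A: "A \<subseteq> verts G" using assms unfolding premolecule_def by simp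
  have bij: "bij_betw f (verts G) (B \<union> V)"
    using iso unfolding graph_iso_def molecule_graph_def verts_def by simp
  have edge_iff: "{u, v} \<in> edges G \<longleftrightarrow> {f u, f v} \<in> \<B> \<union> {{v, b} | v b. v \<in> V \<and> b \<in> B}"
    if "u \<in> verts G" "v \<in> verts G" for u v
    using iso that unfolding graph_iso_def molecule_graph_def edges_def by simp
  have outside: "f u \<in> V" if "u \<in> verts G - A" for u
  proof -
    have "f u \<notin> f ` A"
      using that A inj_on_image_mem_iff[OF bij_betw_imp_inj_on[OF bij]] by blast
    then show ?thesis using that bij fA bij_betwE by blast
  qed
  have "B \<inter> V = {}" "\<forall>e\<in>\<B>. e \<subseteq> B" using vm unfolding valid_molecule_def by auto
  then have no_edge_in_V: "{x, y} \<notin> \<B> \<union> {{v, b} | v b. v \<in> V \<and> b \<in> B}"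
    if "x \<in> V" "y \<in> V" for x y
    using that by (auto simp: doubleton_eq_iff) blast
  have no_edge: "{u, v} \<notin> edges G" if "u \<in> verts G - A" "v \<in> verts G - A" for u v
    using that edge_iff[of u v] no_edge_in_V[OF outside outside] by blast
  have edge: "{u, a} \<in> edges G" if "u \<in> verts G - A" "a \<in> A" for u a
  proof -
    have "{f u, f a} \<in> {{v, b} | v b. v \<in> V \<and> b \<in> B}"
      using outside[OF that(1)] fA that(2) by blast
    then show ?thesis using edge_iff[of u a] that A by blast
  qed
  show ?thesis unfolding cone_base_def using A no_edge edge by simp
qed

lemma cone_base_edge_iff:
  assumes "cone_base G A" "u \<in> verts G" "v \<in> verts G" "u \<notin> A \<or> v \<notin> A"
  shows "{u, v} \<in> edges G \<longleftrightarrow> u \<in> A \<or> v \<in> A"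
proof (cases "u \<in> A")
  case True
  then have "{v, u} \<in> edges G" using assms unfolding cone_base_def by blast
  then show ?thesis using True by (simp add: insert_commute)
next
  case False
  then show ?thesis using assms unfolding cone_base_def by blast
qed

lemma discrete_inducedI:
  assumes "is_graph G"
    and "\<And>u v. u \<in> verts G \<Longrightarrow> v \<in> verts G \<Longrightarrow> u \<in> S \<Longrightarrow> v \<in> S \<Longrightarrow> {u, v} \<notin> edges G"
  shows "discrete (induced G S)"
proof -
  have "False" if "e \<in> edges G" "e \<subseteq> S" for e
  proof -
    have "e \<subseteq> verts G" "card e = 2" using assms(1) that(1) unfolding is_graph_def by auto
    then obtain x y where "e = {x, y}" by (meson card_2_iff)
    then show False using assms(2) that \<open>e \<subseteq> verts G\<close> by auto
  qed
  then show ?thesis unfolding discrete_def induced_def edges_def by auto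
qed

lemma cone_base_discrete_outside:
  assumes "is_graph G" "cone_base G A" "S \<inter> A = {}"
  shows "discrete (induced G S)"
  using assms(2,3) by (intro discrete_inducedI[OF assms(1)]) (unfold cone_base_def, blast)

lemma cone_bases_isomorphic:
  assumes A: "cone_base G A" and B: "cone_base G B"
    and fin: "finite A" "finite B" and card: "card A = card B"
  shows "isomorphic (induced G A) (induced G B)"
proof -
  have "card (A - B) = card (B - A)"
    using fin card by (metis card_Diff_subset_Int Int_commute finite_Int)
  then obtain g where g: "bij_betw g (A - B) (B - A)"
    using fin finite_same_card_bij by blast
  define h where "h x = (if x \<in> B then x else g x)" for x
  have "bij_betw h (A - B) (B - A)"
    using g unfolding h_def by (rule bij_betw_cong[THEN iffD1, rotated]) auto
  moreover have "bij_betw h (A \<inter> B) (A \<inter> B)"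
    unfolding h_def by (rule bij_betw_cong[THEN iffD1, rotated, of id]) auto
  ultimately have "bij_betw h ((A - B) \<union> (A \<inter> B)) ((B - A) \<union> (A \<inter> B))"
    by (rule bij_betw_combine) auto
  moreover have "(A - B) \<union> (A \<inter> B) = A" "(B - A) \<union> (A \<inter> B) = B" by auto
  ultimately have h: "bij_betw h A B" by simp
  have h_in_A: "h x \<in> A \<longleftrightarrow> x \<in> B" if "x \<in> A" for x
    using that bij_betwE[OF g] unfolding h_def by auto
  have VA: "A \<subseteq> verts G" and VB: "B \<subseteq> verts G" using A B unfolding cone_base_def by auto
  have "{u, v} \<in> edges G \<longleftrightarrow> {h u, h v} \<in> edges G" if "u \<in> A" "v \<in> A" for u v
  proof (cases "u \<in> B \<and> v \<in> B")
    case True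
    then show ?thesis by (simp add: h_def)
  next
    case False
    have "h u \<in> B" "h v \<in> B" using h that bij_betwE by blast+
    moreover have "h u \<notin> A \<or> h v \<notin> A" using False h_in_A that by simp
    ultimately have "{h u, h v} \<in> edges G \<longleftrightarrow> h u \<in> A \<or> h v \<in> A"
      using VB by (intro cone_base_edge_iff[OF A]) auto
    moreover have "{u, v} \<in> edges G \<longleftrightarrow> u \<in> B \<or> v \<in> B"
      using False that VA by (intro cone_base_edge_iff[OF B]) auto
    ultimately show ?thesis using h_in_A that by simp
  qed
  moreover have "verts (induced G A) = A" "verts (induced G B) = B"
    using VA VB unfolding induced_def verts_def by auto
  moreover have "e \<in> edges (induced G S) \<longleftrightarrow> e \<in> edges G \<and> e \<subseteq> S" for e S
    unfolding induced_def edges_def by simp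
  ultimately have "graph_iso h (induced G A) (induced G B)"
    unfolding graph_iso_def using h bij_betwE[OF h] by (simp add: insert_subset)
  then show ?thesis unfolding isomorphic_def by blast
qed

theorem mainTheorem9:
  fixes G :: "'a graph" and k :: nat and A B :: "'a set"
  assumes "is_graph G"
    and "abstract_molecule k G"
    and "premolecule k G A"
    and "premolecule k G B"
  shows "discrete (induced G (A - B)) \<and> discrete (induced G (B - A)) \<and>
         discrete (induced G (verts G - (A \<union> B))) \<and>
         isomorphic (induced G A) (induced G B)"
proof -
  \<comment> \<open>The hypothesis \<open>abstract_molecule k G\<close> is implied by \<open>premolecule k G A\<close> and not used.\<close>
  have A: "cone_base G A" and B: "cone_base G B"
    using assms(3,4) by (simp_all add: premolecule_cone_base)
  have "finite A" "finite B"
    using A B assms(1) unfolding cone_base_def is_graph_def by (meson finite_subset)+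
  moreover have "card A = card B"
    using assms(3,4) unfolding premolecule_def by simp
  ultimately have "isomorphic (induced G A) (induced G B)"
    using A B by (rule cone_bases_isomorphic[rotated 2])
  moreover have "discrete (induced G (A - B))"
    by (rule cone_base_discrete_outside[OF assms(1) B]) auto
  moreover have "discrete (induced G (B - A))"
    by (rule cone_base_discrete_outside[OF assms(1) A]) auto
  moreover have "discrete (induced G (verts G - (A \<union> B)))"
    by (rule cone_base_discrete_outside[OF assms(1) A]) auto
  ultimately show ?thesis by blast
qed

end
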